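(* Let $r>1$ and let $k,\ell,m$ be positive integers with $k\ge 2$. Choose $x_0$ uniformly at random from the vertex set of the $(k,\ell,m)$-metafunnel and run the Moran process with fitness $r$ on it with initial mutant $x_0$. Then the extinction probability is at least $1/(2(m+r))$.
   Context: Moran process: given a directed graph $G$ and fitness $r$, one vertex $x_0$ is a mutant, the rest non-mutants. At each step a vertex $v$ is chosen with probability proportional to fitness (mutants $r$, non-mutants $1$), an out-neighbour $w$ of $v$ is chosen uniformly at random and the state of $v$ is copied to $w$. Extinction: eventually no vertex is a mutant. The $(k,\ell,m)$-metafunnel has vertex set $V_0\cup V_1\cup\dots\cup V_k$ (disjoint), where $V_0=\{v^*\}$ and for $i\in[k]$, $V_i$ is the disjoint union of sets $V_{i,1},\dots,V_{i,\ell}$ each of size $m^i$; its edge set is $(V_0\times V_k)\cup(V_1\times V_0)\cup\bigcup_{i\in[k-1]}\bigcup_{j\in[\ell]}(V_{i+1,j}\times V_{i,j})$. *)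

theory Defs
  imports Complex_Main
begin

text \<open>Moran process on a directed graph with finite vertex set V and edge set E
  (pairs (v,w) meaning an edge from v to w). States are sets of mutants.\<close>

definition out_nbrs :: "('a \<times> 'a) set \<Rightarrow> 'a \<Rightarrow> 'a set" where
  "out_nbrs E v = {w. (v, w) \<in> E}"

definition fitness :: "real \<Rightarrow> 'a set \<Rightarrow> 'a \<Rightarrow> real" where
  "fitness r S v = (if v \<in> S then r else 1)"

definition total_fitness :: "'a set \<Rightarrow> real \<Rightarrow> 'a set \<Rightarrow> real" where
  "total_fitness V r S = (\<Sum>v\<in>V. fitness r S v)"

definition moran_update :: "'a set \<Rightarrow> 'a \<Rightarrow> 'a \<Rightarrow> 'a set" where
  "moran_update S v w = (if v \<in> S then insert w S else S - {w})"

text \<open>A vertex with no out-neighbours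
  (does not occur in the metafunnel) leaves the state unchanged when chosen.\<close>
fun ext_within :: "'a set \<Rightarrow> ('a \<times> 'a) set \<Rightarrow> real \<Rightarrow> nat \<Rightarrow> 'a set \<Rightarrow> real" where
  "ext_within V E r 0 S = (if S = {} then 1 else 0)"
| "ext_within V E r (Suc n) S =
     (if S = {} then 1 else
        (\<Sum>v\<in>V. (fitness r S v / total_fitness V r S) *
           (if out_nbrs E v = {} then ext_within V E r n S
            else (\<Sum>w\<in>out_nbrs E v. ext_within V E r n (moran_update S v w)
                    / real (card (out_nbrs E v))))))"

definition extinction_prob :: "'a set \<Rightarrow> ('a \<times> 'a) set \<Rightarrow> real \<Rightarrow> 'a set \<Rightarrow> real" where
  "extinction_prob V E r S = (SUP n. ext_within V E r n S)"

definition uniform_extinction_prob :: "'a set \<Rightarrow> ('a \<times> 'a) set \<Rightarrow> real \<Rightarrow> real" where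
  "uniform_extinction_prob V E r =
     (\<Sum>x\<in>V. extinction_prob V E r {x}) / real (card V)"

text \<open>(k,l,m)-metafunnel. Vertex (0,0,0) is v*; vertex (i,j,t) with 1<=i<=k,
  1<=j<=l, t<m^i belongs to V_{i,j}.\<close>
definition mf_part :: "nat \<Rightarrow> nat \<Rightarrow> nat \<Rightarrow> (nat \<times> nat \<times> nat) set" where
  "mf_part m i j = {(i, j, t) | t. t < m ^ i}"

definition mf_level :: "nat \<Rightarrow> nat \<Rightarrow> nat \<Rightarrow> (nat \<times> nat \<times> nat) set" where
  "mf_level l m i = (\<Union>j\<in>{1..l}. mf_part m i j)"

definition metafunnel_V :: "nat \<Rightarrow> nat \<Rightarrow> nat \<Rightarrow> (nat \<times> nat \<times> nat) set" where
  "metafunnel_V k l m = {(0, 0, 0)} \<union> (\<Union>i\<in>{1..k}. mf_level l m i)"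

definition metafunnel_E :: "nat \<Rightarrow> nat \<Rightarrow> nat \<Rightarrow> ((nat \<times> nat \<times> nat) \<times> (nat \<times> nat \<times> nat)) set" where
  "metafunnel_E k l m =
     ({(0, 0, 0)} \<times> mf_level l m k) \<union> (mf_level l m 1 \<times> {(0, 0, 0)}) \<union>
     (\<Union>i\<in>{1..k - 1}. \<Union>j\<in>{1..l}. mf_part m (i + 1) j \<times> mf_part m i j)"

end

theory Submission
  imports Defs
begin

(* While a single vertex x is the only mutant, a step of a non-mutant v that has x among its
   out-neighbours kills x with probability 1/deg(v); summed over v this is the temperature T(x).
   Every other non-mutant step leaves the state unchanged, and a step of x itself (weight r)
   contributes at least 0. Hence the probability p(n) of extinction within n steps satisfies
   p(n+1) >= (T + (N - 1 - T) p(n)) / (r + N - 1), whose fixed point is T(x) / (T(x) + r).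

   In the metafunnel every vertex outside the top level V_k has temperature at least m: the
   m^(i+1) vertices of V_(i+1,j) all point to each vertex of V_(i,j) and have out-degree m^i,
   and v* is entered from the m vertices of V_(1,1), which have out-degree 1. Since
   |V_k| = m |V_(k-1)|, these vertices make up at least a 1/(2m) fraction of the graph, so the
   uniform extinction probability is at least 1/(2m) * m/(m + r). *)

definition offspring_prob :: "('a \<times> 'a) set \<Rightarrow> 'a \<Rightarrow> 'a \<Rightarrow> real" where
  "offspring_prob E v w = (if (v, w) \<in> E then 1 / real (card (out_nbrs E v)) else 0)"

definition temperature :: "'a set \<Rightarrow> ('a \<times> 'a) set \<Rightarrow> 'a \<Rightarrow> real" where
  "temperature V E x = (\<Sum>v\<in>V - {x}. offspring_prob E v x)"

definition ext_within_after :: "'a set \<Rightarrow> ('a \<times> 'a) set \<Rightarrow> real \<Rightarrow> nat \<Rightarrow> 'a set \<Rightarrow> 'a \<Rightarrow> real" where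
  "ext_within_after V E r n S v =
     (if out_nbrs E v = {} then ext_within V E r n S
      else (\<Sum>w\<in>out_nbrs E v. ext_within V E r n (moran_update S v w) / real (card (out_nbrs E v))))"

lemma ext_within_empty [simp]: "ext_within V E r n {} = 1"
  by (cases n) auto

lemma ext_within_Suc:
  "S \<noteq> {} \<Longrightarrow> ext_within V E r (Suc n) S =
     (\<Sum>v\<in>V. fitness r S v / total_fitness V r S * ext_within_after V E r n S v)"
  by (simp add: ext_within_after_def)

declare ext_within.simps(2) [simp del]

lemma offspring_prob_nonneg: "0 \<le> offspring_prob E v w"
  by (simp add: offspring_prob_def)

lemma offspring_prob_le_1:
  assumes "finite (out_nbrs E v)"
  shows "offspring_prob E v w \<le> 1"
proof (cases "(v, w) \<in> E")
  case True
  then have "out_nbrs E v \<noteq> {}" by (auto simp: out_nbrs_def)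
  with assms have "1 \<le> card (out_nbrs E v)" by (simp add: Suc_le_eq card_gt_0_iff)
  with True show ?thesis by (simp add: offspring_prob_def)
qed (simp add: offspring_prob_def)

lemma temperature_nonneg: "0 \<le> temperature V E x"
  unfolding temperature_def by (intro sum_nonneg offspring_prob_nonneg)

lemma temperature_le:
  assumes "finite V" "x \<in> V" "\<And>v. finite (out_nbrs E v)"
  shows "temperature V E x \<le> real (card V) - 1"
proof -
  have "temperature V E x \<le> (\<Sum>v\<in>V - {x}. 1)"
    unfolding temperature_def using assms(3) by (intro sum_mono offspring_prob_le_1)
  moreover have "1 \<le> card V" using assms(1,2) by (auto simp: Suc_le_eq card_gt_0_iff)
  ultimately show ?thesis using assms(1,2) by (simp add: card_Diff_singleton of_nat_diff)
qed

lemma total_fitness_pos: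
  assumes "finite V" "V \<noteq> {}" "r > 0"
  shows "total_fitness V r S > 0"
  unfolding total_fitness_def using assms by (intro sum_pos) (auto simp: fitness_def)

lemma total_fitness_singleton:
  assumes "finite V" "x \<in> V"
  shows "total_fitness V r {x} = r + real (card V) - 1"
proof -
  have "total_fitness V r {x} = r + (\<Sum>v\<in>V - {x}. 1)"
    unfolding total_fitness_def using assms by (simp add: sum.remove fitness_def)
  moreover have "1 \<le> card V" using assms by (auto simp: Suc_le_eq card_gt_0_iff)
  ultimately show ?thesis using assms by (simp add: card_Diff_singleton of_nat_diff)
qed

lemma weighted_mean_in_unit_interval:
  fixes p f :: "'b \<Rightarrow> real"
  assumes "sum p A = 1" "\<And>x. x \<in> A \<Longrightarrow> 0 \<le> p x" "\<And>x. x \<in> A \<Longrightarrow> f x \<in> {0..1}"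
  shows "(\<Sum>x\<in>A. p x * f x) \<in> {0..1}"
proof -
  have "(\<Sum>x\<in>A. p x * f x) \<le> sum p A"
    using assms(2,3) by (intro sum_mono mult_left_le) auto
  moreover have "0 \<le> (\<Sum>x\<in>A. p x * f x)"
    using assms(2,3) by (intro sum_nonneg) auto
  ultimately show ?thesis using assms(1) by simp
qed

lemma ext_within_after_in_unit_interval:
  assumes "finite (out_nbrs E v)" "\<And>S. ext_within V E r n S \<in> {0..1}"
  shows "ext_within_after V E r n S v \<in> {0..1}"
proof (cases "out_nbrs E v = {}")
  case False
  let ?c = "real (card (out_nbrs E v))"
  have "(\<Sum>w\<in>out_nbrs E v. 1 / ?c * ext_within V E r n (moran_update S v w)) \<in> {0..1}"
    using assms False by (intro weighted_mean_in_unit_interval) auto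
  with False show ?thesis by (simp add: ext_within_after_def)
qed (use assms(2)[of S] in \<open>simp add: ext_within_after_def\<close>)

lemma ext_within_in_unit_interval:
  assumes "finite V" "V \<noteq> {}" "r > 0" "\<And>v. finite (out_nbrs E v)"
  shows "ext_within V E r n S \<in> {0..1}"
proof (induction n arbitrary: S)
  case (Suc n)
  show ?case
  proof (cases "S = {}")
    case False
    have "(\<Sum>v\<in>V. fitness r S v / total_fitness V r S) = 1"
      using total_fitness_pos[OF assms(1-3), of S]
      by (simp add: sum_divide_distrib[symmetric] total_fitness_def)
    moreover have "0 \<le> fitness r S v / total_fitness V r S" for v
      using total_fitness_pos[OF assms(1-3), of S] assms(3) by (simp add: fitness_def)
    ultimately have "(\<Sum>v\<in>V. fitness r S v / total_fitness V r S * ext_within_after V E r n S v)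
        \<in> {0..1}"
      using Suc.IH assms(4)
      by (intro weighted_mean_in_unit_interval ext_within_after_in_unit_interval)
    with False show ?thesis by (simp add: ext_within_Suc)
  qed simp
qed simp

lemma ext_within_after_singleton:
  assumes "v \<noteq> x" "finite (out_nbrs E v)"
  shows "ext_within_after V E r n {x} v =
    offspring_prob E v x + (1 - offspring_prob E v x) * ext_within V E r n {x}"
proof (cases "out_nbrs E v = {}")
  case True
  then have "(v, x) \<notin> E" by (auto simp: out_nbrs_def)
  with True show ?thesis by (simp add: ext_within_after_def offspring_prob_def)
next
  case False
  let ?a = "ext_within V E r n {x}" and ?c = "real (card (out_nbrs E v))"
  have "ext_within V E r n (moran_update {x} v w) = ?a + (if w = x then 1 - ?a else 0)" for w
    using assms(1) by (simp add: moran_update_def insert_Diff_if)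
  then have "ext_within_after V E r n {x} v =
      (\<Sum>w\<in>out_nbrs E v. ?a + (if w = x then 1 - ?a else 0)) / ?c"
    using False by (simp add: ext_within_after_def sum_divide_distrib)
  also have "\<dots> = ?a + (if x \<in> out_nbrs E v then 1 - ?a else 0) / ?c"
    using False assms(2) by (simp add: sum.distrib add_divide_distrib)
  finally show ?thesis
    using False assms(2) by (auto simp: offspring_prob_def out_nbrs_def field_simps)
qed

lemma ext_within_Suc_singleton_ge:
  fixes n :: nat
  assumes "finite V" "x \<in> V" "r > 0" "\<And>v. finite (out_nbrs E v)"
  defines "a \<equiv> ext_within V E r n {x}" and "d \<equiv> temperature V E x" and "N \<equiv> real (card V)"
  shows "(d + (N - 1 - d) * a) / (r + N - 1) \<le> ext_within V E r (Suc n) {x}"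
proof -
  have T: "total_fitness V r {x} = r + N - 1"
    unfolding N_def using assms(1,2) by (rule total_fitness_singleton)
  have "1 \<le> card V" using assms(1,2) by (auto simp: Suc_le_eq card_gt_0_iff)
  then have T_pos: "0 < r + N - 1" using assms(3) by (simp add: N_def)
  have "(\<Sum>v\<in>V - {x}. a + offspring_prob E v x * (1 - a)) = (N - 1) * a + d * (1 - a)"
    using assms(1,2) \<open>1 \<le> card V\<close>
    by (simp add: sum.distrib sum_distrib_right[symmetric] temperature_def d_def N_def
        card_Diff_singleton of_nat_diff)
  then have sum_eq: "(\<Sum>v\<in>V - {x}. (a + offspring_prob E v x * (1 - a)) / (r + N - 1))
      = (d + (N - 1 - d) * a) / (r + N - 1)"
    by (simp add: sum_divide_distrib[symmetric] algebra_simps)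
  have "0 \<le> ext_within_after V E r n {x} x"
    using ext_within_after_in_unit_interval ext_within_in_unit_interval assms(1-4) by fastforce
  then have "(d + (N - 1 - d) * a) / (r + N - 1)
      \<le> r / (r + N - 1) * ext_within_after V E r n {x} x +
         (\<Sum>v\<in>V - {x}. (a + offspring_prob E v x * (1 - a)) / (r + N - 1))"
    using T_pos assms(3) by (simp add: sum_eq)
  also have "\<dots> = ext_within V E r (Suc n) {x}"
    using assms(1,2,4)
    by (simp add: ext_within_Suc T sum.remove fitness_def ext_within_after_singleton a_def
        algebra_simps)
  finally show ?thesis .
qed

lemma affine_recurrence_lower_bound:
  fixes a :: "nat \<Rightarrow> real"
  assumes "0 \<le> s" "s < 1" "0 \<le> a 0" "\<And>n. c + s * a n \<le> a (Suc n)" "\<And>n. a n \<le> L"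
  shows "c / (1 - s) \<le> L"
proof -
  have approx: "c / (1 - s) * (1 - s ^ n) \<le> a n" for n
  proof (induction n)
    case (Suc n)
    have "c / (1 - s) * (1 - s ^ Suc n) = c + s * (c / (1 - s) * (1 - s ^ n))"
      using assms(2) by (simp add: field_simps)
    also have "\<dots> \<le> c + s * a n"
      using mult_left_mono[OF Suc.IH assms(1)] by simp
    also have "\<dots> \<le> a (Suc n)" by (rule assms(4))
    finally show ?case .
  qed (simp add: assms(3))
  have "(\<lambda>n. c / (1 - s) * (1 - s ^ n)) \<longlonglongrightarrow> c / (1 - s) * (1 - 0)"
    using assms(1,2) by (intro tendsto_intros LIMSEQ_power_zero) simp
  then have "c / (1 - s) * (1 - 0) \<le> L"
    by (rule LIMSEQ_le_const2) (use approx assms(5) order_trans in blast)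
  then show ?thesis by simp
qed

lemma ext_within_le_extinction_prob:
  assumes "finite V" "V \<noteq> {}" "r > 0" "\<And>v. finite (out_nbrs E v)"
  shows "ext_within V E r n S \<le> extinction_prob V E r S"
  unfolding extinction_prob_def
  using ext_within_in_unit_interval[OF assms] by (intro cSUP_upper bdd_aboveI[of _ 1]) auto

lemma extinction_prob_singleton_ge:
  assumes "finite V" "x \<in> V" "r > 0" "\<And>v. finite (out_nbrs E v)"
  shows "temperature V E x / (temperature V E x + r) \<le> extinction_prob V E r {x}"
proof -
  define d where "d = temperature V E x"
  define N where "N = real (card V)"
  define s where "s = (N - 1 - d) / (r + N - 1)"
  have d: "0 \<le> d" "d \<le> N - 1"
    unfolding d_def N_def using temperature_nonneg temperature_le[OF assms(1,2,4)] by auto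
  then have "1 - s = (d + r) / (r + N - 1)"
    using assms(3) by (simp add: s_def field_simps)
  then have "d / (d + r) = d / (r + N - 1) / (1 - s)"
    using d assms(3) by simp
  also have "\<dots> \<le> extinction_prob V E r {x}"
  proof (rule affine_recurrence_lower_bound)
    show "0 \<le> s" "s < 1" using d assms(3) by (simp_all add: s_def)
    show "0 \<le> ext_within V E r 0 {x}" by simp
    show "d / (r + N - 1) + s * ext_within V E r n {x} \<le> ext_within V E r (Suc n) {x}" for n
      using ext_within_Suc_singleton_ge[OF assms, of n] d assms(3)
      by (simp add: s_def d_def N_def add_divide_distrib)
    show "ext_within V E r n {x} \<le> extinction_prob V E r {x}" for n
      using ext_within_le_extinction_prob assms by blast
  qed
  finally show ?thesis by (simp only: d_def)
qed

lemma uniform_extinction_prob_ge: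
  assumes "finite V" "V \<noteq> {}" "r > 0" "\<And>v. finite (out_nbrs E v)"
    and "A \<subseteq> V" "\<And>x. x \<in> A \<Longrightarrow> c \<le> extinction_prob V E r {x}"
  shows "real (card A) / real (card V) * c \<le> uniform_extinction_prob V E r"
proof -
  have nonneg: "0 \<le> extinction_prob V E r {x}" for x
    using ext_within_le_extinction_prob[OF assms(1-4), of 0 "{x}"] by simp
  have "(\<Sum>x\<in>A. c) \<le> (\<Sum>x\<in>A. extinction_prob V E r {x})"
    by (intro sum_mono assms(6))
  also have "\<dots> \<le> (\<Sum>x\<in>V. extinction_prob V E r {x})"
    using assms(1,5) nonneg by (intro sum_mono2)
  finally have "real (card A) * c / real (card V) \<le> uniform_extinction_prob V E r"
    unfolding uniform_extinction_prob_def by (simp add: divide_right_mono)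
  then show ?thesis by simp
qed

lemma finite_out_nbrs: "finite E \<Longrightarrow> finite (out_nbrs E v)"
  by (rule finite_subset[of _ "snd ` E"]) (force simp: out_nbrs_def)+

lemma card_div_le_temperature:
  assumes "finite V" "P \<subseteq> V - {x}" "\<And>v. v \<in> P \<Longrightarrow> (v, x) \<in> E \<and> card (out_nbrs E v) = c"
  shows "real (card P) / real c \<le> temperature V E x"
proof -
  have "real (card P) / real c = (\<Sum>v\<in>P. offspring_prob E v x)"
    using assms(3) by (simp add: offspring_prob_def sum_divide_distrib[symmetric])
  also have "\<dots> \<le> temperature V E x"
    unfolding temperature_def using assms(1,2) by (intro sum_mono2 offspring_prob_nonneg) auto
  finally show ?thesis .
qed

lemma card_mf_part: "card (mf_part m i j) = m ^ i"
  and finite_mf_part: "finite (mf_part m i j)"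
proof -
  have "mf_part m i j = (\<lambda>t. (i, j, t)) ` {..<m ^ i}"
    by (auto simp: mf_part_def)
  then show "card (mf_part m i j) = m ^ i" "finite (mf_part m i j)"
    by (simp_all add: card_image inj_on_def)
qed

lemma finite_mf_level: "finite (mf_level l m i)"
  by (simp add: mf_level_def finite_mf_part)

lemma card_mf_level: "card (mf_level l m i) = l * m ^ i"
proof -
  have "card (mf_level l m i) = (\<Sum>j\<in>{1..l}. card (mf_part m i j))"
    unfolding mf_level_def by (rule card_UN_disjoint) (auto simp: finite_mf_part mf_part_def)
  then show ?thesis by (simp add: card_mf_part)
qed

lemma finite_metafunnel_V: "finite (metafunnel_V k l m)"
  by (simp add: metafunnel_V_def finite_mf_level)

lemma finite_out_nbrs_metafunnel: "finite (out_nbrs (metafunnel_E k l m) v)"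
  by (intro finite_out_nbrs) (simp add: metafunnel_E_def finite_mf_level finite_mf_part)

lemma out_nbrs_metafunnel_level_1:
  assumes "t < m" "j \<in> {1..l}"
  shows "out_nbrs (metafunnel_E k l m) (1, j, t) = {(0, 0, 0)}"
  using assms by (auto simp: out_nbrs_def metafunnel_E_def mf_level_def mf_part_def)

lemma out_nbrs_metafunnel_upper:
  assumes "i \<in> {1..k - 1}" "j \<in> {1..l}" "t < m ^ (i + 1)"
  shows "out_nbrs (metafunnel_E k l m) (i + 1, j, t) = mf_part m i j"
  using assms by (auto simp: out_nbrs_def metafunnel_E_def mf_level_def mf_part_def)

lemma metafunnel_temperature_ge:
  assumes "k \<ge> 1" "l \<ge> 1" "m \<ge> 1" "x \<in> metafunnel_V k l m" "x \<notin> mf_level l m k"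
  shows "real m \<le> temperature (metafunnel_V k l m) (metafunnel_E k l m) x"
proof (cases "x = (0, 0, 0)")
  case True
  have "real (card (mf_part m 1 1)) / real 1 \<le> temperature (metafunnel_V k l m) (metafunnel_E k l m) x"
  proof (rule card_div_le_temperature[OF finite_metafunnel_V])
    show "mf_part m 1 1 \<subseteq> metafunnel_V k l m - {x}"
      using True assms(1,2) by (auto simp: metafunnel_V_def mf_level_def mf_part_def)
    show "(v, x) \<in> metafunnel_E k l m \<and> card (out_nbrs (metafunnel_E k l m) v) = 1"
      if "v \<in> mf_part m 1 1" for v
      using that True assms(2) out_nbrs_metafunnel_level_1
      by (auto simp: metafunnel_E_def mf_level_def mf_part_def)
  qed
  then show ?thesis by (simp add: card_mf_part)
next
  case False
  with assms(4) obtain i j where ij: "i \<in> {1..k}" "j \<in> {1..l}" "x \<in> mf_part m i j"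
    by (auto simp: metafunnel_V_def mf_level_def)
  moreover have "i \<noteq> k"
    using assms(5) ij by (auto simp: mf_level_def)
  ultimately have i: "i \<in> {1..k - 1}"
    by auto
  have "real (card (mf_part m (i + 1) j)) / real (m ^ i)
      \<le> temperature (metafunnel_V k l m) (metafunnel_E k l m) x"
  proof (rule card_div_le_temperature[OF finite_metafunnel_V])
    show "mf_part m (i + 1) j \<subseteq> metafunnel_V k l m - {x}"
      using i ij(2,3) by (auto simp: metafunnel_V_def mf_level_def mf_part_def)
    fix v
    assume "v \<in> mf_part m (i + 1) j"
    then obtain t where "v = (i + 1, j, t)" "t < m ^ (i + 1)"
      by (auto simp: mf_part_def)
    then have "out_nbrs (metafunnel_E k l m) v = mf_part m i j"
      using out_nbrs_metafunnel_upper[OF i ij(2)] by simp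
    then show "(v, x) \<in> metafunnel_E k l m \<and> card (out_nbrs (metafunnel_E k l m) v) = m ^ i"
      using ij(3) card_mf_part by (metis mem_Collect_eq out_nbrs_def)
  qed
  then show ?thesis using assms(3) by (simp add: card_mf_part)
qed

lemma card_metafunnel_V_le:
  assumes "k \<ge> 2" "m \<ge> 1"
  shows "card (metafunnel_V k l m) \<le> 2 * m * card (metafunnel_V k l m - mf_level l m k)"
proof -
  let ?V = "metafunnel_V k l m" and ?L = "mf_level l m k"
  have "?L \<subseteq> ?V" "mf_level l m (k - 1) \<subseteq> ?V - ?L"
    using assms(1) by (auto simp: metafunnel_V_def mf_level_def mf_part_def)
  then have V: "card ?V = card (?V - ?L) + card ?L"
    and lower: "l * m ^ (k - 1) \<le> card (?V - ?L)"
    using finite_metafunnel_V card_mf_level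
    by (metis card_Diff_subset card_mono finite_subset le_add_diff_inverse2,
        metis card_mono finite_Diff)
  have "card ?L = m * (l * m ^ (k - 1))"
    using assms(1) by (simp add: card_mf_level power_eq_if)
  also have "\<dots> \<le> m * card (?V - ?L)"
    using lower by simp
  finally have "card ?L \<le> m * card (?V - ?L)" .
  moreover have "card (?V - ?L) \<le> m * card (?V - ?L)"
    using assms(2) by simp
  ultimately show ?thesis
    using V by linarith
qed

theorem lemma5p2:
  fixes r :: real and k l m :: nat
  assumes "r > 1" and "k \<ge> 2" and "l \<ge> 1" and "m \<ge> 1"
  shows "uniform_extinction_prob (metafunnel_V k l m) (metafunnel_E k l m) r
           \<ge> 1 / (2 * (real m + r))"
proof -
  let ?V = "metafunnel_V k l m" and ?E = "metafunnel_E k l m"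
  let ?A = "metafunnel_V k l m - mf_level l m k"
  have V: "finite ?V" "?V \<noteq> {}"
    by (rule finite_metafunnel_V) (simp add: metafunnel_V_def)
  have ext_A: "real m / (real m + r) \<le> extinction_prob ?V ?E r {x}" if "x \<in> ?A" for x
  proof -
    have "real m \<le> temperature ?V ?E x"
      using metafunnel_temperature_ge that assms by auto
    then have "real m / (real m + r) \<le> temperature ?V ?E x / (temperature ?V ?E x + r)"
      using assms(1) by (simp add: frac_le field_simps)
    also have "\<dots> \<le> extinction_prob ?V ?E r {x}"
      using that assms(1) V(1) finite_out_nbrs_metafunnel by (intro extinction_prob_singleton_ge) auto
    finally show ?thesis .
  qed
  have "real (card ?V) \<le> 2 * real m * real (card ?A)"
    using card_metafunnel_V_le[OF assms(2,4), of l] of_nat_mono by fastforce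
  then have fraction_A: "1 / (2 * real m) \<le> real (card ?A) / real (card ?V)"
    using V assms(4) by (simp add: field_simps card_gt_0_iff)
  have "1 / (2 * (real m + r)) = 1 / (2 * real m) * (real m / (real m + r))"
    using assms(4) by simp
  also have "\<dots> \<le> real (card ?A) / real (card ?V) * (real m / (real m + r))"
    using fraction_A assms(1) by (intro mult_right_mono) auto
  also have "\<dots> \<le> uniform_extinction_prob ?V ?E r"
    using V assms(1) ext_A finite_out_nbrs_metafunnel by (intro uniform_extinction_prob_ge) auto
  finally show ?thesis .
qed

end
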